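(* Let $V$ be an $\mathrm{FI}_G$-module which is presented in finite degree. Then for all $a\ge1$ and $i\ge1$, $$\deg H_i^{D^a}(V)\le \mathrm{dwidth}(V)-1+i-a.$$
   Context: Fix a commutative ring $k$ and a group $G$. $\mathrm{FI}_G$ is the category with objects $[n]$ ($n\ge0$) and morphisms $[n]\to[m]$ the pairs $(f,g)$ with $f$ injective and $g:[n]\to G$ a map of sets; composition $(f,g)\circ(f',g')=(f\circ f',h)$, $h(x)=g'(x)\,g(f'(x))$. $G_n=\mathfrak S_n\wr G$. An $\mathrm{FI}_G$-module is a functor $V:\mathrm{FI}_G\to\mathrm{Mod}_k$, $V_n=V([n])$. $M(n)_m=k[\mathrm{Hom}_{\mathrm{FI}_G}([n],[m])]$; for a $k[G_n]$-module $W$, $M(W)_m=W\otimes_{k[G_n]}k[\mathrm{Hom}_{\mathrm{FI}_G}([n],[m])]$; direct sums of these are relatively projective. $\deg V=\sup\{n:V_n\ne0\}$ ($\sup\emptyset=-\infty$). Generated in degree $\le m$: surjection $\bigoplus M(n_i)\to V$, $n_i\le m$; related in degree $\le r$: exact $0\to K\to M\to V\to0$, $M$ relatively projective, $K$ generated in degree $\le r$; presented in finite degree: both finite. $\Sigma$ sends $[n]\mapsto[n+1]$ and $(f,g)\mapsto(f_+,g_+)$ ($f_+$ extends $f$ by $n+1\mapsto m+1$, $g_+$ extends $g$ by $n+1\mapsto1_G$); $SV=V\circ\Sigma$; $\iota:V\to SV$ is $V(f^n,\mathbf1)$ in degree $n$. $DV=\mathrm{coker}(\iota)$, $D^a$ its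 $a$-th iterate, $H_i^{D^a}$ left derived functors of $D^a$. $\mathrm{dwidth}(V)=\sup_{a\ge1}(\deg H_1^{D^a}(V)+a)\in\mathbb Z\cup\{\pm\infty\}$ (with $-\infty+c=-\infty$). *)

theory Defs
  imports Main "HOL-Library.Extended_Real"
begin

text \<open>The group G is written additively (type class group_add, not necessarily
abelian); 0 is the unit 1_G and the product g h is written g + h.
The ring k is a type of class comm_ring_1.  [n] = {1..n}.\<close>

type_synonym 'g fimor = "(nat \<Rightarrow> nat) \<times> (nat \<Rightarrow> 'g)"

text \<open>Morphisms [n] -> [m] of FI_G, normalised to be 0 outside [n].\<close>
definition fi_hom :: "nat \<Rightarrow> nat \<Rightarrow> ('g::group_add) fimor set" where
  "fi_hom n m = {(f, g). f ` {1..n} \<subseteq> {1..m} \<and> inj_on f {1..n}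
                    \<and> (\<forall>x. x \<notin> {1..n} \<longrightarrow> f x = 0 \<and> g x = 0)}"

definition fi_comp :: "('g::group_add) fimor \<Rightarrow> 'g fimor \<Rightarrow> 'g fimor" where
  "fi_comp \<psi> \<phi> = (fst \<psi> \<circ> fst \<phi>, \<lambda>x. snd \<phi> x + snd \<psi> (fst \<phi> x))"

text \<open>The identity of [n]; regarded in fi_hom n (Suc n) it is (f^n, 1).\<close>
definition fi_id :: "nat \<Rightarrow> ('g::group_add) fimor" where
  "fi_id n = (\<lambda>x. if x \<in> {1..n} then x else 0, \<lambda>_. 0)"

text \<open>An FI_G-module is represented by subquotients of an ambient k-module 'v:
  V_n = car n / rel n, and act n m phi induces V(phi) : V_n -> V_m.\<close>
record ('g, 'v) fimod =
  car :: "nat \<Rightarrow> 'v set"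
  rel :: "nat \<Rightarrow> 'v set"
  act :: "nat \<Rightarrow> nat \<Rightarrow> 'g fimor \<Rightarrow> 'v \<Rightarrow> 'v"

definition msum :: "'v::ab_group_add set \<Rightarrow> 'v set \<Rightarrow> 'v set" where
  "msum X Y = {x + y | x y. x \<in> X \<and> y \<in> Y}"

definition lin_on :: "('k::comm_ring_1 \<Rightarrow> 'v::ab_group_add \<Rightarrow> 'v) \<Rightarrow> ('k \<Rightarrow> 'w::ab_group_add \<Rightarrow> 'w)
                       \<Rightarrow> 'v set \<Rightarrow> ('v \<Rightarrow> 'w) \<Rightarrow> bool" where
  "lin_on sV sW S h \<longleftrightarrow> (\<forall>x\<in>S. \<forall>y\<in>S. h (x + y) = h x + h y) \<and> (\<forall>c. \<forall>x\<in>S. h (sV c x) = sW c (h x))"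

definition is_fimod :: "('k::comm_ring_1 \<Rightarrow> 'v::ab_group_add \<Rightarrow> 'v) \<Rightarrow> ('g::group_add, 'v) fimod \<Rightarrow> bool" where
  "is_fimod s V \<longleftrightarrow> module s \<and>
     (\<forall>n. module.subspace s (car V n) \<and> module.subspace s (rel V n) \<and> rel V n \<subseteq> car V n) \<and>
     (\<forall>n m. \<forall>\<phi>\<in>fi_hom n m. lin_on s s (car V n) (act V n m \<phi>) \<and>
        act V n m \<phi> ` car V n \<subseteq> car V m \<and> act V n m \<phi> ` rel V n \<subseteq> rel V m) \<and>
     (\<forall>n. \<forall>x\<in>car V n. act V n n (fi_id n) x - x \<in> rel V n) \<and>
     (\<forall>n m l. \<forall>\<phi>\<in>fi_hom n m. \<forall>\<psi>\<in>fi_hom m l. \<forall>x\<in>car V n.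
        act V n l (fi_comp \<psi> \<phi>) x - act V m l \<psi> (act V n m \<phi> x) \<in> rel V l)"

definition fi_morph :: "('k::comm_ring_1 \<Rightarrow> 'v::ab_group_add \<Rightarrow> 'v) \<Rightarrow> ('g::group_add, 'v) fimod
      \<Rightarrow> ('k \<Rightarrow> 'w::ab_group_add \<Rightarrow> 'w) \<Rightarrow> ('g, 'w) fimod \<Rightarrow> (nat \<Rightarrow> 'v \<Rightarrow> 'w) \<Rightarrow> bool" where
  "fi_morph sV V sW W \<phi> \<longleftrightarrow>
     (\<forall>n. lin_on sV sW (car V n) (\<phi> n) \<and> \<phi> n ` car V n \<subseteq> car W n \<and> \<phi> n ` rel V n \<subseteq> rel W n) \<and>
     (\<forall>n m. \<forall>\<psi>\<in>fi_hom n m. \<forall>x\<in>car V n. \<phi> m (act V n m \<psi> x) - act W n m \<psi> (\<phi> n x) \<in> rel W m)"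

text \<open>deg V = sup {n. V_n \<noteq> 0}, in ereal (Sup {} = -\<infinity>).\<close>
definition fdeg :: "('g, 'v) fimod \<Rightarrow> ereal" where
  "fdeg V = Sup {ereal (real n) | n. \<not> car V n \<subseteq> rel V n}"

definition shift :: "('g::group_add, 'v) fimod \<Rightarrow> ('g, 'v) fimod" where
  "shift V = \<lparr> car = \<lambda>n. car V (Suc n), rel = \<lambda>n. rel V (Suc n),
     act = \<lambda>n m \<phi>. act V (Suc n) (Suc m) ((fst \<phi>)(Suc n := Suc m), (snd \<phi>)(Suc n := 0)) \<rparr>"

definition iota :: "('g::group_add, 'v) fimod \<Rightarrow> nat \<Rightarrow> 'v \<Rightarrow> 'v" where
  "iota V n = act V n (Suc n) (fi_id n)"

definition coker :: "('g, 'v::ab_group_add) fimod \<Rightarrow> ('g, 'v) fimod \<Rightarrow> (nat \<Rightarrow> 'v \<Rightarrow> 'v) \<Rightarrow> ('g, 'v) fimod" where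
  "coker V W \<phi> = \<lparr> car = car W, rel = \<lambda>n. msum (rel W n) (\<phi> n ` car V n), act = act W \<rparr>"

definition fiD :: "('g::group_add, 'v::ab_group_add) fimod \<Rightarrow> ('g, 'v) fimod" where
  "fiD V = coker V (shift V) (iota V)"

definition fiDpow :: "nat \<Rightarrow> ('g::group_add, 'v::ab_group_add) fimod \<Rightarrow> ('g, 'v) fimod" where
  "fiDpow a = fiD ^^ a"

text \<open>D^a on morphisms: the induced map on iterated cokernels.\<close>
definition fiDpow_map :: "nat \<Rightarrow> (nat \<Rightarrow> 'v \<Rightarrow> 'w) \<Rightarrow> nat \<Rightarrow> 'v \<Rightarrow> 'w" where
  "fiDpow_map a \<phi> = (\<lambda>n. \<phi> (n + a))"

definition homology :: "('g, 'v::ab_group_add) fimod \<Rightarrow> (nat \<Rightarrow> 'v \<Rightarrow> 'v) \<Rightarrow> ('g, 'v) fimod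
      \<Rightarrow> (nat \<Rightarrow> 'v \<Rightarrow> 'v) \<Rightarrow> ('g, 'v) fimod \<Rightarrow> ('g, 'v) fimod" where
  "homology X \<alpha> Y \<beta> Z = \<lparr> car = \<lambda>n. {y \<in> car Y n. \<beta> n y \<in> rel Z n},
      rel = \<lambda>n. msum (rel Y n) (\<alpha> n ` car X n), act = act Y \<rparr>"

definition exact_at :: "('g, 'u) fimod \<Rightarrow> (nat \<Rightarrow> 'u \<Rightarrow> 'v::ab_group_add) \<Rightarrow> ('g, 'v) fimod
      \<Rightarrow> (nat \<Rightarrow> 'v \<Rightarrow> 'w) \<Rightarrow> ('g, 'w) fimod \<Rightarrow> bool" where
  "exact_at X \<alpha> Y \<beta> Z \<longleftrightarrow>
     (\<forall>n. \<forall>x\<in>car X n. \<beta> n (\<alpha> n x) \<in> rel Z n) \<and>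
     (\<forall>n. {y \<in> car Y n. \<beta> n y \<in> rel Z n} \<subseteq> msum (\<alpha> n ` car X n) (rel Y n))"

definition fi_surj :: "('g, 'u) fimod \<Rightarrow> (nat \<Rightarrow> 'u \<Rightarrow> 'v::ab_group_add) \<Rightarrow> ('g, 'v) fimod \<Rightarrow> bool" where
  "fi_surj X \<alpha> Y \<longleftrightarrow> (\<forall>n. car Y n \<subseteq> msum (\<alpha> n ` car X n) (rel Y n))"

text \<open>P is free, i.e. isomorphic to a direct sum of M(n_j): there are elements
  x_j in P_{n_j} such that, for every m, the elements P(\<phi>) x_j with
  \<phi> in Hom([n_j],[m]) form a k-basis of P_m.\<close>
definition is_free :: "('k::comm_ring_1 \<Rightarrow> 'v::ab_group_add \<Rightarrow> 'v) \<Rightarrow> ('g::group_add, 'v) fimod \<Rightarrow> bool" where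
  "is_free s P \<longleftrightarrow> (\<exists>B. B \<subseteq> {(n, x). x \<in> car P n} \<and> (\<forall>m.
     car P m \<subseteq> msum (module.span s {act P n m \<phi> x | n x \<phi>. (n, x) \<in> B \<and> \<phi> \<in> fi_hom n m}) (rel P m) \<and>
     (\<forall>T (c :: (nat \<times> 'v) \<times> 'g fimor \<Rightarrow> 'k).
        finite T \<and> T \<subseteq> {(b, \<phi>). b \<in> B \<and> \<phi> \<in> fi_hom (fst b) m} \<and>
        (\<Sum>t\<in>T. s (c t) (act P (fst (fst t)) m (snd t) (snd (fst t)))) \<in> rel P m
        \<longrightarrow> (\<forall>t\<in>T. c t = 0))))"

text \<open>M is relatively projective, i.e. isomorphic to a direct sum of M(W_i),
  W_i a k[G_{n_i}]-module: W_i is realised (mod rel) inside M_{n_i}, and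
  M_m is the direct sum, over i and over order-preserving injections
  f : [n_i] -> [m], of the injective images M(f,1)(W_i)
  (since M(W)_m = W \<otimes>_{k[G_n]} k[Hom([n],[m])] = \<oplus>_f W).\<close>
definition relproj :: "('k::comm_ring_1 \<Rightarrow> 'v::ab_group_add \<Rightarrow> 'v) \<Rightarrow> ('g::group_add, 'v) fimod \<Rightarrow> bool" where
  "relproj s M \<longleftrightarrow> (\<exists>I :: (nat \<times> 'v set) set.
     (\<forall>(n, W)\<in>I. module.subspace s W \<and> rel M n \<subseteq> W \<and> W \<subseteq> car M n \<and>
         (\<forall>\<phi>\<in>fi_hom n n. act M n n \<phi> ` W \<subseteq> W)) \<and>
     (\<forall>m. let idx = {(n, W, f). (n, W) \<in> I \<and> (f, \<lambda>_. 0 :: 'g) \<in> fi_hom n m \<and> strict_mono_on {1..n} f};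
             U = (\<lambda>(n, W, f). act M n m (f, \<lambda>_. 0) ` W) in
        car M m \<subseteq> msum (module.span s (\<Union> (U ` idx))) (rel M m) \<and>
        (\<forall>T u. finite T \<and> T \<subseteq> idx \<and> (\<forall>t\<in>T. u t \<in> U t) \<and> sum u T \<in> rel M m
            \<longrightarrow> (\<forall>t\<in>T. u t \<in> rel M m)) \<and>
        (\<forall>(n, W, f)\<in>idx. \<forall>w\<in>W. act M n m (f, \<lambda>_. 0) w \<in> rel M m \<longrightarrow> w \<in> rel M n)))"

text \<open>Generated in degree \<le> r: a surjection \<oplus> M(n_i) -> V with n_i \<le> r; by
  Yoneda such a map is a family x_i \<in> V_{n_i}, and surjectivity means that the
  V(\<phi>) x_i span.\<close>
definition gen_le :: "('k::comm_ring_1 \<Rightarrow> 'v::ab_group_add \<Rightarrow> 'v) \<Rightarrow> ('g::group_add, 'v) fimod \<Rightarrow> nat \<Rightarrow> bool" where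
  "gen_le s V r \<longleftrightarrow> (\<exists>X. X \<subseteq> {(n, x). n \<le> r \<and> x \<in> car V n} \<and> (\<forall>m.
     car V m \<subseteq> msum (module.span s {act V n m \<phi> x | n x \<phi>. (n, x) \<in> X \<and> \<phi> \<in> fi_hom n m}) (rel V m)))"

definition gen_fin :: "('k::comm_ring_1 \<Rightarrow> 'v::ab_group_add \<Rightarrow> 'v) \<Rightarrow> ('g::group_add, 'v) fimod \<Rightarrow> bool" where
  "gen_fin s V \<longleftrightarrow> (\<exists>r. gen_le s V r)"

definition fi_kernel :: "('g, 'u) fimod \<Rightarrow> ('g, 'v) fimod \<Rightarrow> (nat \<Rightarrow> 'u \<Rightarrow> 'v) \<Rightarrow> ('g, 'u) fimod" where
  "fi_kernel M V \<pi> = \<lparr> car = \<lambda>n. {x \<in> car M n. \<pi> n x \<in> rel V n}, rel = rel M, act = act M \<rparr>"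

text \<open>Presented in finite degree, witnessed by 0 -> ker \<pi> -> M --\<pi>--> V -> 0.\<close>
definition presented_fin_by :: "('k::comm_ring_1 \<Rightarrow> 'm::ab_group_add \<Rightarrow> 'm) \<Rightarrow> ('g::group_add, 'm) fimod
      \<Rightarrow> (nat \<Rightarrow> 'm \<Rightarrow> 'v::ab_group_add) \<Rightarrow> ('k \<Rightarrow> 'v \<Rightarrow> 'v) \<Rightarrow> ('g, 'v) fimod \<Rightarrow> bool" where
  "presented_fin_by sM M \<pi> sV V \<longleftrightarrow> is_fimod sV V \<and> gen_fin sV V \<and>
     is_fimod sM M \<and> relproj sM M \<and> fi_morph sM M sV V \<pi> \<and> fi_surj M \<pi> V \<and>
     gen_fin sM (fi_kernel M V \<pi>)"

definition free_resolution :: "('k::comm_ring_1 \<Rightarrow> 'v::ab_group_add \<Rightarrow> 'v) \<Rightarrow> ('g::group_add, 'v) fimod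
      \<Rightarrow> ('k \<Rightarrow> 'p::ab_group_add \<Rightarrow> 'p) \<Rightarrow> (nat \<Rightarrow> ('g, 'p) fimod) \<Rightarrow> (nat \<Rightarrow> nat \<Rightarrow> 'p \<Rightarrow> 'p)
      \<Rightarrow> (nat \<Rightarrow> 'p \<Rightarrow> 'v) \<Rightarrow> bool" where
  "free_resolution sV V sP P d eps \<longleftrightarrow>
     (\<forall>i. is_fimod sP (P i) \<and> is_free sP (P i)) \<and>
     fi_morph sP (P 0) sV V eps \<and> (\<forall>i. fi_morph sP (P (Suc i)) sP (P i) (d (Suc i))) \<and>
     fi_surj (P 0) eps V \<and> exact_at (P 1) (d 1) (P 0) eps V \<and>
     (\<forall>i. exact_at (P (Suc (Suc i))) (d (Suc (Suc i))) (P (Suc i)) (d (Suc i)) (P i))"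

text \<open>deg H_i^{D^a}(V), i \<ge> 1, computed from the resolution (P, d):
  homology at D^a P_i of D^a P_{i+1} -> D^a P_i -> D^a P_{i-1}.\<close>
definition derived_deg :: "(nat \<Rightarrow> ('g::group_add, 'p::ab_group_add) fimod) \<Rightarrow> (nat \<Rightarrow> nat \<Rightarrow> 'p \<Rightarrow> 'p)
      \<Rightarrow> nat \<Rightarrow> nat \<Rightarrow> ereal" where
  "derived_deg P d a i = fdeg (homology
      (fiDpow a (P (Suc i))) (fiDpow_map a (d (Suc i)))
      (fiDpow a (P i)) (fiDpow_map a (d i)) (fiDpow a (P (i - 1))))"

definition dwidth :: "(nat \<Rightarrow> ('g::group_add, 'p::ab_group_add) fimod) \<Rightarrow> (nat \<Rightarrow> nat \<Rightarrow> 'p \<Rightarrow> 'p) \<Rightarrow> ereal" where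
  "dwidth P d = (SUP a\<in>{1..}. derived_deg P d a 1 + ereal (real a))"

end

theory Submission
  imports Defs
begin

text \<open>For a free FI_G-module P and every b, the map \<iota> : D^b P \<rightarrow> S D^b P is injective.
  In degree n, D^b P is P_{n+b} modulo the relations of P and the basis elements P(\<phi>) x
  whose injection misses a point of {n+1..n+b}; \<iota> is induced by the injection
  [n+b] \<rightarrow> [n+b+1] skipping n+1, which maps the remaining basis elements injectively to
  basis elements that again miss no point of {n+2..n+b+1}.

  Hence the long exact homology sequence of 0 \<rightarrow> D^b P_\<bullet> \<rightarrow> S D^b P_\<bullet> \<rightarrow> D^{b+1} P_\<bullet> \<rightarrow> 0,
  for a free resolution P_\<bullet> of V, shows that a nonzero class of H_i^{D^{b+1}} V in degree n
  forces a nonzero class of H_i^{D^b} V in degree n+1 or of H_{i-1}^{D^b} V in degree n.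
  Descending to i = 1 (and H_i^{D^0} V = 0 for i \<ge> 1) bounds n + a + 1 - i by dwidth V.\<close>

section \<open>Morphisms of FI_G\<close>

lemma fi_hom_iff:
  "\<phi> \<in> fi_hom n m \<longleftrightarrow> fst \<phi> ` {1..n} \<subseteq> {1..m} \<and> inj_on (fst \<phi>) {1..n}
                    \<and> (\<forall>x. x \<notin> {1..n} \<longrightarrow> fst \<phi> x = 0 \<and> snd \<phi> x = 0)"
  by (cases \<phi>) (simp add: fi_hom_def)

lemma fi_hom_outside: "\<phi> \<in> fi_hom n m \<Longrightarrow> x \<notin> {1..n} \<Longrightarrow> fst \<phi> x = 0 \<and> snd \<phi> x = 0"
  unfolding fi_hom_iff by blast

lemma fi_hom_inside: "\<phi> \<in> fi_hom n m \<Longrightarrow> x \<in> {1..n} \<Longrightarrow> fst \<phi> x \<in> {1..m}"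
  unfolding fi_hom_iff by blast

lemma fi_hom_le: "\<phi> \<in> fi_hom n m \<Longrightarrow> fst \<phi> x \<le> m"
  using fi_hom_inside[of \<phi> n m x] fi_hom_outside[of \<phi> n m x] by (cases "x \<in> {1..n}") auto

lemma fi_id_fi_hom_Suc: "fi_id n \<in> fi_hom n (Suc n)"
  unfolding fi_hom_iff fi_id_def by (auto simp: inj_on_def)

lemma fi_comp_fi_hom:
  assumes \<phi>: "\<phi> \<in> fi_hom n m" and \<psi>: "\<psi> \<in> fi_hom m l"
  shows "fi_comp \<psi> \<phi> \<in> fi_hom n l"
proof -
  have "fst \<phi> ` {1..n} \<subseteq> {1..m}" using \<phi> unfolding fi_hom_iff by blast
  then have "inj_on (fst \<psi> \<circ> fst \<phi>) {1..n}"
    using \<phi> \<psi> unfolding fi_hom_iff by (blast intro: comp_inj_on inj_on_subset)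
  moreover have "fst \<psi> 0 = 0" "snd \<psi> 0 = 0" using fi_hom_outside[OF \<psi>, of 0] by auto
  ultimately show ?thesis
    using fi_hom_inside[OF \<phi>] fi_hom_inside[OF \<psi>] fi_hom_outside[OF \<phi>]
    unfolding fi_hom_iff fi_comp_def by auto
qed

definition shift_hom :: "nat \<Rightarrow> nat \<Rightarrow> ('g::group_add) fimor \<Rightarrow> 'g fimor" where
  "shift_hom n m \<phi> = ((fst \<phi>)(Suc n := Suc m), (snd \<phi>)(Suc n := 0))"

lemma shift_hom_fi_hom:
  assumes \<phi>: "\<phi> \<in> fi_hom n m"
  shows "shift_hom n m \<phi> \<in> fi_hom (Suc n) (Suc m)"
proof -
  let ?f = "(fst \<phi>)(Suc n := Suc m)"
  have range: "fst \<phi> x \<in> {1..m}" if "x \<in> {1..n}" for x using fi_hom_inside[OF \<phi> that] .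
  have split: "{1..Suc n} = insert (Suc n) {1..n}" by auto
  have fresh: "Suc m \<notin> fst \<phi> ` {1..n}" using range by fastforce
  have "inj_on (fst \<phi>) {1..n}" using \<phi> unfolding fi_hom_iff by blast
  then have "inj_on ?f {1..n}" using fresh by (rule inj_on_fun_updI)
  moreover have "?f ` {1..n} = fst \<phi> ` {1..n}" by simp
  ultimately have "inj_on ?f {1..Suc n}" unfolding split using fresh by simp
  moreover have "?f ` {1..Suc n} \<subseteq> {1..Suc m}"
    unfolding split using range by (force intro: le_SucI)
  moreover have "?f x = 0 \<and> ((snd \<phi>)(Suc n := 0)) x = 0" if "x \<notin> {1..Suc n}" for x
    using that fi_hom_outside[OF \<phi>, of x] by auto
  ultimately show ?thesis unfolding fi_hom_iff shift_hom_def by simp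
qed

lemma shift_hom_fi_id: "shift_hom n n (fi_id n) = fi_id (Suc n)"
  unfolding shift_hom_def fi_id_def by (auto simp: fun_eq_iff)

lemma shift_hom_comp_fi_id:
  assumes \<phi>: "\<phi> \<in> fi_hom n m"
  shows "fi_comp (shift_hom n m \<phi>) (fi_id n) = fi_comp (fi_id m) \<phi>"
proof -
  have "fst \<phi> 0 = 0" "snd \<phi> 0 = 0" using fi_hom_outside[OF \<phi>, of 0] by auto
  then show ?thesis
    using fi_hom_inside[OF \<phi>] fi_hom_outside[OF \<phi>]
    by (auto simp: fun_eq_iff fi_comp_def shift_hom_def fi_id_def)
qed

lemma shift_hom_fi_comp:
  assumes \<phi>: "\<phi> \<in> fi_hom n m" and \<psi>: "\<psi> \<in> fi_hom m l"
  shows "fi_comp (shift_hom m l \<psi>) (shift_hom n m \<phi>) = shift_hom n l (fi_comp \<psi> \<phi>)"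
proof -
  have "fst \<psi> 0 = 0" "snd \<psi> 0 = 0" using fi_hom_outside[OF \<psi>, of 0] by auto
  moreover have "fst \<phi> x \<noteq> Suc m" for x using fi_hom_le[OF \<phi>, of x] by simp
  ultimately show ?thesis
    using fi_hom_inside[OF \<phi>] fi_hom_outside[OF \<phi>]
    by (auto simp: fun_eq_iff fi_comp_def shift_hom_def)
qed

lemma msumI: "x \<in> X \<Longrightarrow> y \<in> Y \<Longrightarrow> x + y \<in> msum X Y"
  unfolding msum_def by blast

lemma msumE: "z \<in> msum X Y \<Longrightarrow> (\<And>x y. x \<in> X \<Longrightarrow> y \<in> Y \<Longrightarrow> z = x + y \<Longrightarrow> P) \<Longrightarrow> P"
  unfolding msum_def by blast

lemma msum_commute: "msum X Y = msum Y X"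
  unfolding msum_def by (auto, metis add.commute, metis add.commute)

lemma msum_mono: "X \<subseteq> X' \<Longrightarrow> Y \<subseteq> Y' \<Longrightarrow> msum X Y \<subseteq> msum X' Y'"
  unfolding msum_def by blast

context module
begin

lemma subspace_msum:
  assumes X: "subspace X" and Y: "subspace Y"
  shows "subspace (msum X Y)"
  unfolding subspace_def msum_def
proof safe
  show "\<exists>x y. 0 = x + y \<and> x \<in> X \<and> y \<in> Y" using subspace_0[OF X] subspace_0[OF Y] by force
next
  fix x y x' y' assume "x \<in> X" "y \<in> Y" "x' \<in> X" "y' \<in> Y"
  then show "\<exists>a b. x + y + (x' + y') = a + b \<and> a \<in> X \<and> b \<in> Y"
    by (intro exI[of _ "x + x'"] exI[of _ "y + y'"])
       (auto simp: algebra_simps intro: subspace_add[OF X] subspace_add[OF Y])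
next
  fix c x y assume "x \<in> X" "y \<in> Y"
  then show "\<exists>a b. scale c (x + y) = a + b \<and> a \<in> X \<and> b \<in> Y"
    by (intro exI[of _ "scale c x"] exI[of _ "scale c y"])
       (auto simp: scale_right_distrib intro: subspace_scale[OF X] subspace_scale[OF Y])
qed

lemma subset_msum_left: "subspace Y \<Longrightarrow> X \<subseteq> msum X Y"
  using msumI[of _ X 0 Y] subspace_0[of Y] by auto

lemma subset_msum_right: "subspace X \<Longrightarrow> Y \<subseteq> msum X Y"
  using msumI[of 0 X _ Y] subspace_0[of X] by auto

lemma msum_subset: "subspace Z \<Longrightarrow> X \<subseteq> Z \<Longrightarrow> Y \<subseteq> Z \<Longrightarrow> msum X Y \<subseteq> Z"
  unfolding msum_def using subspace_add[of Z] by blast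

lemma subspace_diff_trans: "subspace R \<Longrightarrow> a - b \<in> R \<Longrightarrow> b - c \<in> R \<Longrightarrow> a - c \<in> R"
  using subspace_add[of R "a - b" "b - c"] by simp

lemma span_image_explicit:
  assumes "v \<in> span (f ` I)"
  shows "\<exists>T c. finite T \<and> T \<subseteq> I \<and> v = (\<Sum>t\<in>T. scale (c t) (f t))"
proof -
  obtain A r where A: "finite A" "A \<subseteq> f ` I" and v: "v = (\<Sum>a\<in>A. scale (r a) a)"
    using assms unfolding span_explicit by auto
  from A(2)[unfolded subset_image_inj] obtain U where U: "U \<subseteq> I" "inj_on f U" "A = f ` U"
    by blast
  have "finite U" using A(1) U finite_imageD by blast
  moreover have "v = (\<Sum>t\<in>U. scale (r (f t)) (f t))" using v U by (simp add: sum.reindex)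
  ultimately show ?thesis using U by (intro exI[of _ U] exI[of _ "\<lambda>t. r (f t)"]) auto
qed

end

lemma lin_on_add: "lin_on sV sW S h \<Longrightarrow> x \<in> S \<Longrightarrow> y \<in> S \<Longrightarrow> h (x + y) = h x + h y"
  unfolding lin_on_def by blast

lemma lin_on_scale: "lin_on sV sW S h \<Longrightarrow> x \<in> S \<Longrightarrow> h (sV c x) = sW c (h x)"
  unfolding lin_on_def by blast

lemma lin_on_zero: "lin_on sV sW S h \<Longrightarrow> 0 \<in> S \<Longrightarrow> h 0 = 0"
  using lin_on_add[of sV sW S h 0 0] by simp

lemma lin_on_diff:
  "lin_on sV sW S h \<Longrightarrow> x - y \<in> S \<Longrightarrow> y \<in> S \<Longrightarrow> h (x - y) = h x - h y"
  using lin_on_add[of sV sW S h "x - y" y] by (simp add: algebra_simps)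

context module
begin

lemma lin_on_sum:
  assumes h: "lin_on scale scale S h" and S: "subspace S" and "finite T"
    and "\<And>t. t \<in> T \<Longrightarrow> f t \<in> S"
  shows "h (sum f T) = (\<Sum>t\<in>T. h (f t))"
  using assms(3,4)
proof (induction T rule: finite_induct)
  case empty then show ?case using lin_on_zero[OF h subspace_0[OF S]] by simp
next
  case (insert x F)
  then have "sum f F \<in> S" using subspace_sum[OF S] by blast
  then show ?case using insert lin_on_add[OF h] by simp
qed

lemma subspace_image_lin_on:
  assumes h: "lin_on scale scale S h" and S: "subspace S"
  shows "subspace (h ` S)"
  unfolding subspace_def
proof safe
  show "0 \<in> h ` S" using lin_on_zero[OF h subspace_0[OF S]] subspace_0[OF S] by (metis image_eqI)
next
  fix x y assume "x \<in> S" "y \<in> S"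
  then show "h x + h y \<in> h ` S" using lin_on_add[OF h] subspace_add[OF S] by (metis image_eqI)
next
  fix c x assume "x \<in> S"
  then show "scale c (h x) \<in> h ` S" using lin_on_scale[OF h] subspace_scale[OF S] by (metis image_eqI)
qed

end

section \<open>FI_G-modules, their morphisms, and the functor D\<close>

lemma fimod_module: "is_fimod s V \<Longrightarrow> module s"
  unfolding is_fimod_def by blast

lemma fimod_car_subspace: "is_fimod s V \<Longrightarrow> module.subspace s (car V n)"
  unfolding is_fimod_def by blast

lemma fimod_rel_subspace: "is_fimod s V \<Longrightarrow> module.subspace s (rel V n)"
  unfolding is_fimod_def by blast

lemma fimod_rel_car: "is_fimod s V \<Longrightarrow> rel V n \<subseteq> car V n"
  unfolding is_fimod_def by blast

lemma fimod_act_lin: "is_fimod s V \<Longrightarrow> \<phi> \<in> fi_hom n m \<Longrightarrow> lin_on s s (car V n) (act V n m \<phi>)"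
  unfolding is_fimod_def by blast

lemma fimod_act_car: "is_fimod s V \<Longrightarrow> \<phi> \<in> fi_hom n m \<Longrightarrow> x \<in> car V n \<Longrightarrow> act V n m \<phi> x \<in> car V m"
  unfolding is_fimod_def by blast

lemma fimod_act_rel: "is_fimod s V \<Longrightarrow> \<phi> \<in> fi_hom n m \<Longrightarrow> x \<in> rel V n \<Longrightarrow> act V n m \<phi> x \<in> rel V m"
  unfolding is_fimod_def by blast

lemma fimod_act_fi_id: "is_fimod s V \<Longrightarrow> x \<in> car V n \<Longrightarrow> act V n n (fi_id n) x - x \<in> rel V n"
  unfolding is_fimod_def by blast

lemma fimod_act_fi_comp:
  "is_fimod s V \<Longrightarrow> \<phi> \<in> fi_hom n m \<Longrightarrow> \<psi> \<in> fi_hom m l \<Longrightarrow> x \<in> car V n \<Longrightarrow>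
   act V n l (fi_comp \<psi> \<phi>) x - act V m l \<psi> (act V n m \<phi> x) \<in> rel V l"
  unfolding is_fimod_def by blast

lemma iota_lin: "is_fimod s V \<Longrightarrow> lin_on s s (car V n) (iota V n)"
  unfolding iota_def using fimod_act_lin fi_id_fi_hom_Suc by blast

lemma iota_car: "is_fimod s V \<Longrightarrow> x \<in> car V n \<Longrightarrow> iota V n x \<in> car V (Suc n)"
  unfolding iota_def using fimod_act_car fi_id_fi_hom_Suc by blast

lemma iota_rel: "is_fimod s V \<Longrightarrow> x \<in> rel V n \<Longrightarrow> iota V n x \<in> rel V (Suc n)"
  unfolding iota_def using fimod_act_rel fi_id_fi_hom_Suc by blast

lemma iota_natural:
  assumes V: "is_fimod s V" and \<phi>: "\<phi> \<in> fi_hom n m" and y: "y \<in> car V n"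
  shows "act V (Suc n) (Suc m) (shift_hom n m \<phi>) (iota V n y) - iota V m (act V n m \<phi> y) \<in> rel V (Suc m)"
proof -
  interpret module s using fimod_module[OF V] .
  let ?p = "shift_hom n m \<phi>"
  have "act V n (Suc m) (fi_comp ?p (fi_id n)) y - act V (Suc n) (Suc m) ?p (iota V n y) \<in> rel V (Suc m)"
    using fimod_act_fi_comp[OF V fi_id_fi_hom_Suc shift_hom_fi_hom[OF \<phi>] y] unfolding iota_def .
  then have "act V (Suc n) (Suc m) ?p (iota V n y) - act V n (Suc m) (fi_comp (fi_id m) \<phi>) y \<in> rel V (Suc m)"
    using subspace_neg[OF fimod_rel_subspace[OF V]] shift_hom_comp_fi_id[OF \<phi>] by fastforce
  moreover have "act V n (Suc m) (fi_comp (fi_id m) \<phi>) y - iota V m (act V n m \<phi> y) \<in> rel V (Suc m)"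
    using fimod_act_fi_comp[OF V \<phi> fi_id_fi_hom_Suc y] unfolding iota_def .
  ultimately show ?thesis by (rule subspace_diff_trans[OF fimod_rel_subspace[OF V]])
qed

lemma fi_morph_lin: "fi_morph sV V sW W \<phi> \<Longrightarrow> lin_on sV sW (car V n) (\<phi> n)"
  unfolding fi_morph_def by blast

lemma fi_morph_car: "fi_morph sV V sW W \<phi> \<Longrightarrow> x \<in> car V n \<Longrightarrow> \<phi> n x \<in> car W n"
  unfolding fi_morph_def by blast

lemma fi_morph_rel: "fi_morph sV V sW W \<phi> \<Longrightarrow> x \<in> rel V n \<Longrightarrow> \<phi> n x \<in> rel W n"
  unfolding fi_morph_def by blast

lemma fi_morph_natural: "fi_morph sV V sW W \<phi> \<Longrightarrow> \<psi> \<in> fi_hom n m \<Longrightarrow> x \<in> car V n \<Longrightarrow>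
   \<phi> m (act V n m \<psi> x) - act W n m \<psi> (\<phi> n x) \<in> rel W m"
  unfolding fi_morph_def by blast

lemma fi_morph_iota: "fi_morph sV V sW W \<phi> \<Longrightarrow> x \<in> car V n \<Longrightarrow>
   \<phi> (Suc n) (iota V n x) - iota W n (\<phi> n x) \<in> rel W (Suc n)"
  unfolding iota_def using fi_morph_natural fi_id_fi_hom_Suc by blast

lemma car_fiD [simp]: "car (fiD V) n = car V (Suc n)"
  and rel_fiD: "rel (fiD V) n = msum (rel V (Suc n)) (iota V n ` car V n)"
  and act_fiD [simp]: "act (fiD V) n m \<phi> = act V (Suc n) (Suc m) (shift_hom n m \<phi>)"
  by (simp_all add: fiD_def coker_def shift_def shift_hom_def)

lemma rel_subset_rel_fiD: "is_fimod s V \<Longrightarrow> rel V (Suc n) \<subseteq> rel (fiD V) n"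
  unfolding rel_fiD
  by (metis fimod_module module.subset_msum_left module.subspace_image_lin_on fimod_car_subspace iota_lin)

lemma fiD_act_rel:
  assumes V: "is_fimod s V" and \<phi>: "\<phi> \<in> fi_hom n m" and x: "x \<in> rel (fiD V) n"
  shows "act (fiD V) n m \<phi> x \<in> rel (fiD V) m"
proof -
  interpret module s using fimod_module[OF V] .
  let ?p = "shift_hom n m \<phi>"
  from x obtain r y where r: "r \<in> rel V (Suc n)" and y: "y \<in> car V n" and x_eq: "x = r + iota V n y"
    unfolding rel_fiD by (auto elim!: msumE)
  have "act (fiD V) n m \<phi> x = act V (Suc n) (Suc m) ?p r + act V (Suc n) (Suc m) ?p (iota V n y)"
    using lin_on_add[OF fimod_act_lin[OF V shift_hom_fi_hom[OF \<phi>]]] fimod_rel_car[OF V] r iota_car[OF V y]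
    unfolding x_eq by auto
  also have "\<dots> = (act V (Suc n) (Suc m) ?p r
      + (act V (Suc n) (Suc m) ?p (iota V n y) - iota V m (act V n m \<phi> y))) + iota V m (act V n m \<phi> y)"
    by simp
  also have "\<dots> \<in> rel (fiD V) m"
    unfolding rel_fiD
    using subspace_add[OF fimod_rel_subspace[OF V] fimod_act_rel[OF V shift_hom_fi_hom[OF \<phi>] r]
        iota_natural[OF V \<phi> y]] fimod_act_car[OF V \<phi> y]
    by (blast intro: msumI)
  finally show ?thesis .
qed

lemma is_fimod_fiD:
  fixes V :: "('g::group_add, 'v::ab_group_add) fimod"
  assumes V: "is_fimod s V"
  shows "is_fimod s (fiD V)"
  unfolding is_fimod_def
proof (intro conjI allI ballI)
  interpret module s using fimod_module[OF V] .
  show "module s" ..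
  fix n
  show "subspace (car (fiD V) n)" using fimod_car_subspace[OF V] by simp
  show "subspace (rel (fiD V) n)"
    unfolding rel_fiD
    by (intro subspace_msum fimod_rel_subspace[OF V] subspace_image_lin_on iota_lin[OF V]
        fimod_car_subspace[OF V])
  show "rel (fiD V) n \<subseteq> car (fiD V) n"
    unfolding rel_fiD car_fiD
    by (rule msum_subset[OF fimod_car_subspace[OF V]]) (use fimod_rel_car[OF V] iota_car[OF V] in auto)
  fix x assume "x \<in> car (fiD V) n"
  then show "act (fiD V) n n (fi_id n) x - x \<in> rel (fiD V) n"
    using fimod_act_fi_id[OF V] rel_subset_rel_fiD[OF V] by (auto simp: shift_hom_fi_id)
next
  fix n m and \<phi> :: "'g fimor" assume \<phi>: "\<phi> \<in> fi_hom n m"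
  show "lin_on s s (car (fiD V) n) (act (fiD V) n m \<phi>)"
    using fimod_act_lin[OF V shift_hom_fi_hom[OF \<phi>]] by simp
  show "act (fiD V) n m \<phi> ` car (fiD V) n \<subseteq> car (fiD V) m"
    using fimod_act_car[OF V shift_hom_fi_hom[OF \<phi>]] by auto
  show "act (fiD V) n m \<phi> ` rel (fiD V) n \<subseteq> rel (fiD V) m"
    using fiD_act_rel[OF V \<phi>] by blast
next
  fix n m l x and \<phi> \<psi> :: "'g fimor"
  assume \<phi>: "\<phi> \<in> fi_hom n m" and \<psi>: "\<psi> \<in> fi_hom m l" and x: "x \<in> car (fiD V) n"
  show "act (fiD V) n l (fi_comp \<psi> \<phi>) x - act (fiD V) m l \<psi> (act (fiD V) n m \<phi> x) \<in> rel (fiD V) l"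
    using fimod_act_fi_comp[OF V shift_hom_fi_hom[OF \<phi>] shift_hom_fi_hom[OF \<psi>]] x
      rel_subset_rel_fiD[OF V] shift_hom_fi_comp[OF \<phi> \<psi>]
    by auto
qed

lemma fi_morph_fiD:
  fixes V W :: "('g::group_add, 'v::ab_group_add) fimod"
  assumes d: "fi_morph s V s W d" and V: "is_fimod s V" and W: "is_fimod s W"
  shows "fi_morph s (fiD V) s (fiD W) (\<lambda>n. d (Suc n))"
  unfolding fi_morph_def
proof (intro conjI allI ballI)
  interpret module s using fimod_module[OF V] .
  fix n
  show "lin_on s s (car (fiD V) n) (d (Suc n))" using fi_morph_lin[OF d] by simp
  show "d (Suc n) ` car (fiD V) n \<subseteq> car (fiD W) n" using fi_morph_car[OF d] by auto
  show "d (Suc n) ` rel (fiD V) n \<subseteq> rel (fiD W) n"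
  proof
    fix z assume "z \<in> d (Suc n) ` rel (fiD V) n"
    then obtain r y where r: "r \<in> rel V (Suc n)" and y: "y \<in> car V n"
      and z: "z = d (Suc n) (r + iota V n y)"
      unfolding rel_fiD by (auto elim!: msumE)
    have "r \<in> car V (Suc n)" using r fimod_rel_car[OF V] by blast
    then have "z = (d (Suc n) r + (d (Suc n) (iota V n y) - iota W n (d n y))) + iota W n (d n y)"
      using z lin_on_add[OF fi_morph_lin[OF d] _ iota_car[OF V y]] by simp
    also have "\<dots> \<in> rel (fiD W) n"
      unfolding rel_fiD
      using subspace_add[OF fimod_rel_subspace[OF W] fi_morph_rel[OF d r] fi_morph_iota[OF d y]]
        fi_morph_car[OF d y]
      by (blast intro: msumI)
    finally show "z \<in> rel (fiD W) n" .
  qed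
next
  fix n m and \<psi> :: "'g fimor" and x assume \<psi>: "\<psi> \<in> fi_hom n m" and x: "x \<in> car (fiD V) n"
  show "d (Suc m) (act (fiD V) n m \<psi> x) - act (fiD W) n m \<psi> (d (Suc n) x) \<in> rel (fiD W) m"
    using fi_morph_natural[OF d shift_hom_fi_hom[OF \<psi>]] x rel_subset_rel_fiD[OF W] by auto
qed

lemma fiDpow_0 [simp]: "fiDpow 0 V = V"
  and fiDpow_Suc: "fiDpow (Suc b) V = fiD (fiDpow b V)"
  by (simp_all add: fiDpow_def)

lemma fiDpow_map_0 [simp]: "fiDpow_map 0 d = d"
  and fiDpow_map_Suc: "fiDpow_map (Suc b) d = (\<lambda>n. fiDpow_map b d (Suc n))"
  by (simp_all add: fiDpow_map_def)

lemma is_fimod_fiDpow: "is_fimod s V \<Longrightarrow> is_fimod s (fiDpow b V)"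
  by (induction b) (auto simp: fiDpow_Suc intro: is_fimod_fiD)

lemma car_fiDpow: "car (fiDpow b V) n = car V (n + b)"
  by (induction b arbitrary: n) (auto simp: fiDpow_Suc)

lemma rel_subset_rel_fiDpow: "is_fimod s V \<Longrightarrow> rel V (n + b) \<subseteq> rel (fiDpow b V) n"
proof (induction b arbitrary: n)
  case (Suc b)
  then have "rel V (Suc n + b) \<subseteq> rel (fiDpow b V) (Suc n)" by blast
  then show ?case
    using rel_subset_rel_fiD[OF is_fimod_fiDpow[OF Suc.prems]] by (auto simp: fiDpow_Suc)
qed simp

lemma fi_morph_fiDpow:
  "fi_morph s V s W d \<Longrightarrow> is_fimod s V \<Longrightarrow> is_fimod s W \<Longrightarrow>
   fi_morph s (fiDpow b V) s (fiDpow b W) (fiDpow_map b d)"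
  by (induction b)
     (auto simp: fiDpow_Suc fiDpow_map_Suc intro: fi_morph_fiD is_fimod_fiDpow)

section \<open>The long exact sequence of D\<close>

definition fi_vanishes_at :: "('g, 'v) fimod \<Rightarrow> nat \<Rightarrow> bool" where
  "fi_vanishes_at V n \<longleftrightarrow> car V n \<subseteq> rel V n"

lemma car_homology [simp]: "car (homology X \<alpha> Y \<beta> Z) n = {y \<in> car Y n. \<beta> n y \<in> rel Z n}"
  and rel_homology [simp]: "rel (homology X \<alpha> Y \<beta> Z) n = msum (rel Y n) (\<alpha> n ` car X n)"
  by (simp_all add: homology_def)

text \<open>The connecting map of 0 \<rightarrow> K \<rightarrow> S K \<rightarrow> D K \<rightarrow> 0 lands in cycles when \<iota> is injective on K_0.\<close>

lemma connecting_cycle: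
  assumes F0: "is_fimod s K0" and F1: "is_fimod s K1"
    and d1: "fi_morph s K1 s K0 d1"
    and dv: "d1 (Suc n) v \<in> rel K0 (Suc n)"
    and inj: "\<And>x. x \<in> car K0 n \<Longrightarrow> iota K0 n x \<in> rel K0 (Suc n) \<Longrightarrow> x \<in> rel K0 n"
    and r: "r \<in> rel K1 (Suc n)" and z: "z \<in> car K1 n" and v: "v = r + iota K1 n z"
  shows "d1 n z \<in> rel K0 n"
proof -
  interpret module s using fimod_module[OF F0] .
  have "r \<in> car K1 (Suc n)" using r fimod_rel_car[OF F1] by blast
  then have "d1 (Suc n) (iota K1 n z) = d1 (Suc n) v - d1 (Suc n) r"
    using lin_on_add[OF fi_morph_lin[OF d1] _ iota_car[OF F1 z]] v by (simp add: algebra_simps)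
  then have "d1 (Suc n) (iota K1 n z) \<in> rel K0 (Suc n)"
    using subspace_diff[OF fimod_rel_subspace[OF F0] dv fi_morph_rel[OF d1 r]] by simp
  then have "iota K0 n (d1 n z) \<in> rel K0 (Suc n)"
    using subspace_diff[OF fimod_rel_subspace[OF F0] _ fi_morph_iota[OF d1 z]] by fastforce
  then show ?thesis using inj fi_morph_car[OF d1 z] by blast
qed

text \<open>Exactness of the long homology sequence of 0 \<rightarrow> K \<rightarrow> S K \<rightarrow> D K \<rightarrow> 0 at H(D K).\<close>

lemma homology_fiD_vanishes:
  fixes K0 K1 K2 K3 :: "('g::group_add, 'v::ab_group_add) fimod"
  assumes F0: "is_fimod s K0" and F1: "is_fimod s K1" and F2: "is_fimod s K2"
    and d1: "fi_morph s K1 s K0 d1" and d2: "fi_morph s K2 s K1 d2"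
    and dd: "\<And>n x. x \<in> car K2 n \<Longrightarrow> d1 n (d2 n x) \<in> rel K0 n"
    and inj: "\<And>x. x \<in> car K0 n \<Longrightarrow> iota K0 n x \<in> rel K0 (Suc n) \<Longrightarrow> x \<in> rel K0 n"
    and H2: "fi_vanishes_at (homology K3 d3 K2 d2 K1) (Suc n)"
    and H1: "fi_vanishes_at (homology K2 d2 K1 d1 K0) n"
  shows "fi_vanishes_at (homology (fiD K3) (\<lambda>n. d3 (Suc n)) (fiD K2) (\<lambda>n. d2 (Suc n)) (fiD K1)) n"
  unfolding fi_vanishes_at_def
proof
  interpret module s using fimod_module[OF F0] .
  fix y assume "y \<in> car (homology (fiD K3) (\<lambda>n. d3 (Suc n)) (fiD K2) (\<lambda>n. d2 (Suc n)) (fiD K1)) n"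
  then have y: "y \<in> car K2 (Suc n)" and "d2 (Suc n) y \<in> msum (rel K1 (Suc n)) (iota K1 n ` car K1 n)"
    by (auto simp: rel_fiD)
  then obtain r z where r: "r \<in> rel K1 (Suc n)" and z: "z \<in> car K1 n"
    and dy: "d2 (Suc n) y = r + iota K1 n z"
    by (auto elim!: msumE)
  have "d1 n z \<in> rel K0 n" by (rule connecting_cycle[OF F0 F1 d1 dd[OF y] inj r z dy])
  then have "z \<in> msum (rel K1 n) (d2 n ` car K2 n)" using H1 z unfolding fi_vanishes_at_def by auto
  then obtain r' w where r': "r' \<in> rel K1 n" and w: "w \<in> car K2 n" and z_eq: "z = r' + d2 n w"
    by (auto elim!: msumE)
  define y' where "y' = y - iota K2 n w"
  have y': "y' \<in> car K2 (Suc n)"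
    unfolding y'_def using subspace_diff[OF fimod_car_subspace[OF F2] y iota_car[OF F2 w]] .
  have "r' \<in> car K1 n" using r' fimod_rel_car[OF F1] by blast
  then have "iota K1 n z = iota K1 n r' + iota K1 n (d2 n w)"
    using lin_on_add[OF iota_lin[OF F1] _ fi_morph_car[OF d2 w]] z_eq by simp
  moreover have "d2 (Suc n) y' = d2 (Suc n) y - d2 (Suc n) (iota K2 n w)"
    using lin_on_diff[OF fi_morph_lin[OF d2] y'[unfolded y'_def] iota_car[OF F2 w]] unfolding y'_def .
  ultimately have "d2 (Suc n) y' = r + iota K1 n r' - (d2 (Suc n) (iota K2 n w) - iota K1 n (d2 n w))"
    using dy by (simp add: algebra_simps)
  also have "\<dots> \<in> rel K1 (Suc n)"
    using subspace_diff[OF fimod_rel_subspace[OF F1]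
        subspace_add[OF fimod_rel_subspace[OF F1] r iota_rel[OF F1 r']] fi_morph_iota[OF d2 w]] .
  finally have "y' \<in> msum (rel K2 (Suc n)) (d3 (Suc n) ` car K3 (Suc n))"
    using H2 y' unfolding fi_vanishes_at_def by auto
  then obtain r3 u where r3: "r3 \<in> rel K2 (Suc n)" and u: "u \<in> car K3 (Suc n)"
    and y'_eq: "y' = r3 + d3 (Suc n) u"
    by (auto elim!: msumE)
  have "y = (r3 + iota K2 n w) + d3 (Suc n) u" using y'_eq unfolding y'_def by (simp add: algebra_simps)
  also have "\<dots> \<in> msum (msum (rel K2 (Suc n)) (iota K2 n ` car K2 n)) (d3 (Suc n) ` car K3 (Suc n))"
    using r3 w u by (intro msumI) auto
  finally show "y \<in> rel (homology (fiD K3) (\<lambda>n. d3 (Suc n)) (fiD K2) (\<lambda>n. d2 (Suc n)) (fiD K1)) n"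
    by (simp add: rel_fiD)
qed

section \<open>The map \<iota> of D^b\<close>

definition skip_hom :: "nat \<Rightarrow> nat \<Rightarrow> ('g::group_add) fimor" where
  "skip_hom n k = (\<lambda>x. if 1 \<le> x \<and> x \<le> n then x else if n < x \<and> x \<le> n + k then Suc x else 0, \<lambda>_. 0)"

fun shift_hom_pow :: "nat \<Rightarrow> nat \<Rightarrow> nat \<Rightarrow> ('g::group_add) fimor \<Rightarrow> 'g fimor" where
  "shift_hom_pow 0 n m \<phi> = \<phi>"
| "shift_hom_pow (Suc b) n m \<phi> = shift_hom_pow b (Suc n) (Suc m) (shift_hom n m \<phi>)"

lemma fst_skip_hom:
  "fst (skip_hom n k) x = (if 1 \<le> x \<and> x \<le> n then x else if n < x \<and> x \<le> n + k then Suc x else 0)"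
  and snd_skip_hom [simp]: "snd (skip_hom n k) x = 0"
  by (simp_all add: skip_hom_def)

lemma skip_hom_fi_hom: "skip_hom n k \<in> fi_hom (n + k) (Suc (n + k))"
  unfolding fi_hom_iff fst_skip_hom by (auto simp: inj_on_def split: if_splits)

lemma skip_hom_inj:
  "x \<le> n + k \<Longrightarrow> y \<le> n + k \<Longrightarrow> fst (skip_hom n k) x = fst (skip_hom n k) y \<Longrightarrow> x = y"
  unfolding fst_skip_hom by (auto split: if_splits)

lemma skip_hom_Suc_inv: "fst (skip_hom n k) x = Suc j \<Longrightarrow> n < j \<Longrightarrow> x = j"
  unfolding fst_skip_hom by (auto split: if_splits)

lemma shift_hom_pow_skip_hom:
  "shift_hom_pow b (n + k) (Suc (n + k)) (skip_hom n k :: ('g::group_add) fimor) = skip_hom n (k + b)"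
proof (induction b arbitrary: k)
  case (Suc b)
  have "shift_hom (n + k) (Suc (n + k)) (skip_hom n k) = (skip_hom n (Suc k) :: 'g fimor)"
    unfolding skip_hom_def shift_hom_def by (auto simp: fun_eq_iff)
  then show ?case using Suc.IH[of "Suc k"] by simp
qed simp

lemma act_fiDpow: "act (fiDpow b V) n m \<phi> = act V (n + b) (m + b) (shift_hom_pow b n m \<phi>)"
  by (induction b arbitrary: n m \<phi>) (simp_all add: fiDpow_Suc)

lemma iota_fiDpow:
  fixes V :: "('g::group_add, 'v::ab_group_add) fimod"
  shows "iota (fiDpow b V) n = act V (n + b) (Suc (n + b)) (skip_hom n b)"
proof -
  have "fi_id n = (skip_hom n 0 :: 'g fimor)"
    unfolding skip_hom_def fi_id_def by (auto simp: fun_eq_iff)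
  then have "shift_hom_pow b n (Suc n) (fi_id n :: 'g fimor) = skip_hom n b"
    using shift_hom_pow_skip_hom[of b n 0] by simp
  then show ?thesis by (simp add: iota_def act_fiDpow)
qed

lemma rel_fiDpow_Suc:
  "rel (fiDpow (Suc b) V) n
     = msum (rel (fiDpow b V) (Suc n)) (act V (n + b) (Suc (n + b)) (skip_hom n b) ` car V (n + b))"
  by (simp add: fiDpow_Suc rel_fiD iota_fiDpow car_fiDpow)

lemma skip_hom_factor:
  fixes \<phi> :: "('g::group_add) fimor"
  assumes \<phi>: "\<phi> \<in> fi_hom k (Suc (n + b))" and avoid: "Suc n \<notin> fst \<phi> ` {1..k}"
  obtains \<chi> where "\<chi> \<in> fi_hom k (n + b)" and "fi_comp (skip_hom n b) \<chi> = \<phi>"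
proof
  define unskip :: "nat \<Rightarrow> nat" where "unskip = (\<lambda>v. if v \<le> n then v else v - 1)"
  define \<chi> where "\<chi> = (\<lambda>i. if i \<in> {1..k} then unskip (fst \<phi> i) else 0, snd \<phi>)"
  have range: "fst \<phi> i \<in> {1..Suc (n + b)} - {Suc n}" if "i \<in> {1..k}" for i
    using fi_hom_inside[OF \<phi> that] avoid that by (metis DiffI image_eqI singletonD)
  have unskip: "unskip v \<in> {1..n + b}" "fst (skip_hom n b :: 'g fimor) (unskip v) = v"
    if "v \<in> {1..Suc (n + b)} - {Suc n}" for v
    using that unfolding unskip_def fst_skip_hom by auto
  have unskip_inj: "inj_on unskip ({1..Suc (n + b)} - {Suc n})"
    unfolding unskip_def inj_on_def by (auto split: if_splits)
  have "inj_on (fst \<phi>) {1..k}" using \<phi> unfolding fi_hom_iff by blast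
  then have "inj_on (unskip \<circ> fst \<phi>) {1..k}"
    by (rule comp_inj_on) (rule inj_on_subset[OF unskip_inj image_subsetI[OF range]])
  then have "inj_on (fst \<chi>) {1..k}"
    by (rule inj_on_cong[THEN iffD2, rotated]) (simp add: \<chi>_def)
  then show "\<chi> \<in> fi_hom k (n + b)"
    using unskip(1)[OF range] fi_hom_outside[OF \<phi>] unfolding fi_hom_iff \<chi>_def by auto
  have "fst (skip_hom n b :: 'g fimor) (fst \<chi> i) = fst \<phi> i" for i
  proof (cases "i \<in> {1..k}")
    case True
    then show ?thesis using unskip(2)[OF range[OF True]] by (simp add: \<chi>_def)
  next
    case False
    then show ?thesis using fi_hom_outside[OF \<phi> False] by (auto simp: \<chi>_def fst_skip_hom)
  qed
  then show "fi_comp (skip_hom n b) \<chi> = \<phi>"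
    by (simp add: fi_comp_def \<chi>_def prod_eq_iff fun_eq_iff)
qed

section \<open>Free FI_G-modules\<close>

text \<open>A basis term ((n, x), \<phi>) stands for the basis element P(\<phi>) x of P_m.\<close>

definition basis_terms :: "(nat \<times> 'v) set \<Rightarrow> nat \<Rightarrow> ((nat \<times> 'v) \<times> ('g::group_add) fimor) set" where
  "basis_terms B m = {(b, \<phi>). b \<in> B \<and> \<phi> \<in> fi_hom (fst b) m}"

definition basis_elem :: "('g::group_add, 'v) fimod \<Rightarrow> nat \<Rightarrow> (nat \<times> 'v) \<times> 'g fimor \<Rightarrow> 'v" where
  "basis_elem P m t = act P (fst (fst t)) m (snd t) (snd (fst t))"

definition push_term :: "('g::group_add) fimor \<Rightarrow> (nat \<times> 'v) \<times> 'g fimor \<Rightarrow> (nat \<times> 'v) \<times> 'g fimor" where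
  "push_term \<psi> t = (fst t, fi_comp \<psi> (snd t))"

definition misses :: "nat \<Rightarrow> nat \<Rightarrow> (nat \<times> 'v) \<times> ('g::group_add) fimor \<Rightarrow> bool" where
  "misses b n t \<longleftrightarrow> \<not> {Suc n..n + b} \<subseteq> fst (snd t) ` {1..fst (fst t)}"

lemma basis_terms_iff: "t \<in> basis_terms B m \<longleftrightarrow> fst t \<in> B \<and> snd t \<in> fi_hom (fst (fst t)) m"
  by (cases t) (auto simp: basis_terms_def)

lemma fst_push_term [simp]: "fst (push_term \<psi> t) = fst t"
  by (simp add: push_term_def)

lemma push_term_basis_terms: "t \<in> basis_terms B m \<Longrightarrow> \<psi> \<in> fi_hom m l \<Longrightarrow> push_term \<psi> t \<in> basis_terms B l"
  using fi_comp_fi_hom[of "snd t" "fst (fst t)" m \<psi> l] by (simp add: basis_terms_iff push_term_def)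

lemma image_push_term: "fst (snd (push_term \<psi> t)) ` X = fst \<psi> ` fst (snd t) ` X"
  by (auto simp: push_term_def fi_comp_def)

lemma inj_on_push_skip_hom:
  fixes B :: "(nat \<times> 'v) set"
  shows "inj_on (push_term (skip_hom n b :: ('g::group_add) fimor)) (basis_terms B (n + b))"
proof (rule inj_onI)
  fix t u :: "(nat \<times> 'v) \<times> 'g fimor"
  assume t: "t \<in> basis_terms B (n + b)" and u: "u \<in> basis_terms B (n + b)"
    and eq: "push_term (skip_hom n b) t = push_term (skip_hom n b) u"
  have skip_eq: "fst (skip_hom n b :: 'g fimor) (fst (snd t) x) = fst (skip_hom n b :: 'g fimor) (fst (snd u) x)"
    and snd_eq: "snd (snd t) x = snd (snd u) x" for x
    using eq by (auto simp: push_term_def fi_comp_def fun_eq_iff)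
  have "fst (snd t) x \<le> n + b" "fst (snd u) x \<le> n + b" for x
    using t u fi_hom_le[of "snd t" "fst (fst t)" "n + b"] fi_hom_le[of "snd u" "fst (fst u)" "n + b"]
    by (auto simp: basis_terms_iff)
  then have "fst (snd t) = fst (snd u)" using skip_hom_inj skip_eq by blast
  moreover have "snd (snd t) = snd (snd u)" using snd_eq by blast
  moreover have "fst t = fst u" using eq by (metis fst_push_term)
  ultimately show "t = u" by (simp add: prod_eq_iff)
qed

lemma misses_Suc_push_skip_hom: "misses (Suc b) n (push_term (skip_hom n b :: ('g::group_add) fimor) t)"
proof -
  have "Suc n \<notin> fst (skip_hom n b :: 'g fimor) ` X" for X
    by (auto simp: fst_skip_hom split: if_splits)
  moreover have "Suc n \<in> {Suc n..n + Suc b}" by simp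
  ultimately show ?thesis unfolding misses_def image_push_term by blast
qed

lemma misses_push_skip_hom:
  fixes t :: "(nat \<times> 'v) \<times> ('g::group_add) fimor"
  assumes "misses b n t"
  shows "misses b (Suc n) (push_term (skip_hom n b) t)"
proof -
  from assms obtain j where j: "j \<in> {Suc n..n + b}" "j \<notin> fst (snd t) ` {1..fst (fst t)}"
    unfolding misses_def by blast
  have inv: "fst (skip_hom n b :: 'g fimor) y = Suc j \<Longrightarrow> y = j" for y
    using j(1) skip_hom_Suc_inv[of n b y j] by simp
  have "Suc j \<notin> fst (skip_hom n b :: 'g fimor) ` fst (snd t) ` {1..fst (fst t)}"
  proof
    assume "Suc j \<in> fst (skip_hom n b :: 'g fimor) ` fst (snd t) ` {1..fst (fst t)}"
    then obtain i where i: "i \<in> {1..fst (fst t)}" "fst (skip_hom n b :: 'g fimor) (fst (snd t) i) = Suc j"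
      by auto
    then have "fst (snd t) i = j" using inv by blast
    then show False using j(2) i(1) by auto
  qed
  moreover have "Suc j \<in> {Suc (Suc n)..Suc n + b}" using j by auto
  ultimately show ?thesis unfolding misses_def image_push_term fst_push_term by blast
qed

lemma not_misses_push_skip_hom:
  fixes t :: "(nat \<times> 'v) \<times> ('g::group_add) fimor"
  assumes "\<not> misses b n t"
  shows "\<not> misses b (Suc n) (push_term (skip_hom n b) t)"
proof -
  have "j \<in> fst (skip_hom n b :: 'g fimor) ` fst (snd t) ` {1..fst (fst t)}"
    if "j \<in> {Suc (Suc n)..Suc n + b}" for j
  proof -
    have "j - 1 \<in> {Suc n..n + b}" and skip: "fst (skip_hom n b :: 'g fimor) (j - 1) = j"
      using that by (auto simp: fst_skip_hom)
    then have "j - 1 \<in> fst (snd t) ` {1..fst (fst t)}" using assms unfolding misses_def by blast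
    then show ?thesis using skip by (metis image_eqI)
  qed
  then show ?thesis unfolding misses_def image_push_term fst_push_term by blast
qed

lemma misses_Suc: "misses b (Suc n) t \<Longrightarrow> misses (Suc b) n t"
proof -
  have "{Suc (Suc n)..Suc n + b} \<subseteq> {Suc n..n + Suc b}" by auto
  then show "misses b (Suc n) t \<Longrightarrow> misses (Suc b) n t" unfolding misses_def by blast
qed

lemma misses_Suc_drop:
  assumes "misses (Suc b) n t" and "Suc n \<in> fst (snd t) ` {1..fst (fst t)}"
  shows "misses b (Suc n) t"
proof -
  have "{Suc n..n + Suc b} \<subseteq> insert (Suc n) {Suc (Suc n)..Suc n + b}" by auto
  then show ?thesis using assms unfolding misses_def by blast
qed

locale free_fimod =
  fixes s :: "'k::comm_ring_1 \<Rightarrow> 'v::ab_group_add \<Rightarrow> 'v" and P :: "('g::group_add, 'v) fimod"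
    and B :: "(nat \<times> 'v) set"
  assumes fimod: "is_fimod s P"
    and basis_car: "B \<subseteq> {(n, x). x \<in> car P n}"
    and basis_spans: "car P m \<subseteq> msum (module.span s (basis_elem P m ` basis_terms B m)) (rel P m)"
    and basis_independent: "finite T \<Longrightarrow> T \<subseteq> basis_terms B m \<Longrightarrow>
      (\<Sum>t\<in>T. s (c t) (basis_elem P m t)) \<in> rel P m \<Longrightarrow> t \<in> T \<Longrightarrow> c t = 0"

lemma is_free_imp_free_fimod:
  assumes "is_fimod s P" and "is_free s P"
  obtains B where "free_fimod s P B"
proof -
  have span_set: "{act P n m \<phi> x | n x \<phi>. (n, x) \<in> B \<and> \<phi> \<in> fi_hom n m} = basis_elem P m ` basis_terms B m"
    for B m unfolding basis_elem_def basis_terms_def by force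
  from assms(2) obtain B where "B \<subseteq> {(n, x). x \<in> car P n}" and "\<forall>m.
     car P m \<subseteq> msum (module.span s (basis_elem P m ` basis_terms B m)) (rel P m) \<and>
     (\<forall>T c. finite T \<and> T \<subseteq> basis_terms B m \<and> (\<Sum>t\<in>T. s (c t) (basis_elem P m t)) \<in> rel P m
        \<longrightarrow> (\<forall>t\<in>T. c t = 0))"
    unfolding is_free_def span_set by (auto simp: basis_terms_def basis_elem_def)
  then have "free_fimod s P B" using assms(1) by unfold_locales blast+
  then show thesis by (rule that)
qed

context free_fimod
begin

sublocale module s using fimod_module[OF fimod] .

lemma basis_elem_car: "t \<in> basis_terms B m \<Longrightarrow> basis_elem P m t \<in> car P m"
  unfolding basis_elem_def basis_terms_iff using basis_car fimod_act_car[OF fimod] by (cases t) auto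

lemma basis_combination_car:
  "finite T \<Longrightarrow> T \<subseteq> basis_terms B m \<Longrightarrow> (\<Sum>t\<in>T. s (c t) (basis_elem P m t)) \<in> car P m"
  using basis_elem_car subspace_sum[OF fimod_car_subspace[OF fimod]] subspace_scale[OF fimod_car_subspace[OF fimod]]
  by (meson subsetD)

lemma basis_expansion:
  assumes "y \<in> car P m"
  obtains T c where "finite T" "T \<subseteq> basis_terms B m" "y - (\<Sum>t\<in>T. s (c t) (basis_elem P m t)) \<in> rel P m"
proof -
  obtain v r where v: "v \<in> span (basis_elem P m ` basis_terms B m)" and r: "r \<in> rel P m" and y: "y = v + r"
    using basis_spans assms by (blast elim: msumE)
  from span_image_explicit[OF v] obtain T c
    where "finite T" "T \<subseteq> basis_terms B m" "v = (\<Sum>t\<in>T. s (c t) (basis_elem P m t))"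
    by blast
  then show thesis using r y by (intro that[of T c]) auto
qed

lemma act_basis_elem:
  assumes t: "t \<in> basis_terms B m" and \<psi>: "\<psi> \<in> fi_hom m l"
  shows "act P m l \<psi> (basis_elem P m t) - basis_elem P l (push_term \<psi> t) \<in> rel P l"
proof -
  have "snd (fst t) \<in> car P (fst (fst t))" "snd t \<in> fi_hom (fst (fst t)) m"
    using t basis_car unfolding basis_terms_iff by auto
  from fimod_act_fi_comp[OF fimod this(2) \<psi> this(1)]
  show ?thesis
    using subspace_neg[OF fimod_rel_subspace[OF fimod]]
    unfolding basis_elem_def push_term_def by fastforce
qed

lemma act_basis_expansion:
  assumes \<psi>: "\<psi> \<in> fi_hom m l" and T: "finite T" "T \<subseteq> basis_terms B m" and y: "y \<in> car P m"
    and y_rel: "y - (\<Sum>t\<in>T. s (c t) (basis_elem P m t)) \<in> rel P m"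
  shows "act P m l \<psi> y - (\<Sum>t\<in>T. s (c t) (basis_elem P l (push_term \<psi> t))) \<in> rel P l"
proof -
  let ?S = "\<Sum>t\<in>T. s (c t) (basis_elem P m t)"
  note lin = fimod_act_lin[OF fimod \<psi>]
  note R = fimod_rel_subspace[OF fimod]
  have S: "?S \<in> car P m" using basis_combination_car[OF T] .
  have "y - ?S \<in> car P m" using y_rel fimod_rel_car[OF fimod] by blast
  from lin_on_add[OF lin S this]
  have "act P m l \<psi> y = act P m l \<psi> ?S + act P m l \<psi> (y - ?S)" by simp
  also have "act P m l \<psi> ?S = (\<Sum>t\<in>T. act P m l \<psi> (s (c t) (basis_elem P m t)))"
    using T(2) basis_elem_car subspace_scale[OF fimod_car_subspace[OF fimod]]
    by (intro lin_on_sum[OF lin fimod_car_subspace[OF fimod] T(1)]) blast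
  also have "\<dots> = (\<Sum>t\<in>T. s (c t) (act P m l \<psi> (basis_elem P m t)))"
  proof (rule sum.cong)
    fix t assume "t \<in> T"
    then show "act P m l \<psi> (s (c t) (basis_elem P m t)) = s (c t) (act P m l \<psi> (basis_elem P m t))"
      using T(2) basis_elem_car lin_on_scale[OF lin] by blast
  qed simp
  finally have "act P m l \<psi> y - (\<Sum>t\<in>T. s (c t) (basis_elem P l (push_term \<psi> t)))
      = (\<Sum>t\<in>T. s (c t) (act P m l \<psi> (basis_elem P m t) - basis_elem P l (push_term \<psi> t)))
        + act P m l \<psi> (y - ?S)"
    by (simp add: scale_right_diff_distrib sum_subtractf algebra_simps)
  also have "\<dots> \<in> rel P l"
    using act_basis_elem[OF _ \<psi>] T(2) fimod_act_rel[OF fimod \<psi> y_rel]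
    by (blast intro: subspace_add[OF R] subspace_sum[OF R] subspace_scale[OF R])
  finally show ?thesis .
qed

lemma rel_fiDpow_subset_span_misses:
  "rel (fiDpow b P) n
     \<subseteq> msum (span (basis_elem P (n + b) ` {t \<in> basis_terms B (n + b). misses b n t})) (rel P (n + b))"
proof (induction b arbitrary: n)
  case 0
  show ?case using subset_msum_right[OF subspace_span] by simp
next
  case (Suc b)
  let ?Z = "msum (span (basis_elem P (n + Suc b) ` {t \<in> basis_terms B (n + Suc b). misses (Suc b) n t}))
      (rel P (n + Suc b))"
  have Z: "subspace ?Z" by (rule subspace_msum[OF subspace_span fimod_rel_subspace[OF fimod]])
  have "rel (fiDpow b P) (Suc n) \<subseteq> msum (span (basis_elem P (n + Suc b) `
      {t \<in> basis_terms B (n + Suc b). misses b (Suc n) t})) (rel P (n + Suc b))"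
    using Suc.IH[of "Suc n"] by simp
  also have "\<dots> \<subseteq> ?Z"
    using misses_Suc by (intro msum_mono span_mono image_mono) auto
  finally have "rel (fiDpow b P) (Suc n) \<subseteq> ?Z" .
  moreover have "act P (n + b) (Suc (n + b)) (skip_hom n b) y \<in> ?Z" if y: "y \<in> car P (n + b)" for y
  proof -
    obtain T c where T: "finite T" "T \<subseteq> basis_terms B (n + b)"
      and y_rel: "y - (\<Sum>t\<in>T. s (c t) (basis_elem P (n + b) t)) \<in> rel P (n + b)"
      using basis_expansion[OF y] by blast
    let ?S = "\<Sum>t\<in>T. s (c t) (basis_elem P (Suc (n + b)) (push_term (skip_hom n b) t))"
    have "?S \<in> span (basis_elem P (n + Suc b) ` {t \<in> basis_terms B (n + Suc b). misses (Suc b) n t})"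
    proof (rule span_sum)
      fix t assume "t \<in> T"
      then have "t \<in> basis_terms B (n + b)" using T(2) by blast
      then have "push_term (skip_hom n b) t \<in> {t \<in> basis_terms B (n + Suc b). misses (Suc b) n t}"
        using push_term_basis_terms[OF _ skip_hom_fi_hom] misses_Suc_push_skip_hom[of b n t] by simp
      then show "s (c t) (basis_elem P (Suc (n + b)) (push_term (skip_hom n b) t))
          \<in> span (basis_elem P (n + Suc b) ` {t \<in> basis_terms B (n + Suc b). misses (Suc b) n t})"
        by (intro span_scale span_base) auto
    qed
    moreover have "act P (n + b) (Suc (n + b)) (skip_hom n b) y - ?S \<in> rel P (n + Suc b)"
      using act_basis_expansion[OF skip_hom_fi_hom T y y_rel] by simp
    ultimately have "?S + (act P (n + b) (Suc (n + b)) (skip_hom n b) y - ?S) \<in> ?Z"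
      by (rule msumI)
    then show ?thesis by simp
  qed
  ultimately show ?case
    unfolding rel_fiDpow_Suc by (intro msum_subset[OF Z]) auto
qed

lemma misses_basis_elem_rel_fiDpow:
  "t \<in> basis_terms B (n + b) \<Longrightarrow> misses b n t \<Longrightarrow> basis_elem P (n + b) t \<in> rel (fiDpow b P) n"
proof (induction b arbitrary: n t)
  case 0
  then show ?case by (simp add: misses_def)
next
  case (Suc b)
  show ?case
  proof (cases "Suc n \<in> fst (snd t) ` {1..fst (fst t)}")
    case True
    then have "basis_elem P (Suc n + b) t \<in> rel (fiDpow b P) (Suc n)"
      using Suc.IH[of t "Suc n"] Suc.prems misses_Suc_drop[OF Suc.prems(2)] by simp
    then show ?thesis
      using rel_subset_rel_fiD[OF is_fimod_fiDpow[OF fimod]] by (auto simp: fiDpow_Suc)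
  next
    case False
    have t: "snd t \<in> fi_hom (fst (fst t)) (Suc (n + b))" "fst t \<in> B"
      using Suc.prems(1) by (auto simp: basis_terms_iff)
    then obtain \<chi> where \<chi>: "\<chi> \<in> fi_hom (fst (fst t)) (n + b)" and "fi_comp (skip_hom n b) \<chi> = snd t"
      using skip_hom_factor False by metis
    then have t': "(fst t, \<chi>) \<in> basis_terms B (n + b)" and push: "push_term (skip_hom n b) (fst t, \<chi>) = t"
      using t by (auto simp: basis_terms_iff push_term_def)
    let ?u = "act P (n + b) (Suc (n + b)) (skip_hom n b) (basis_elem P (n + b) (fst t, \<chi>))"
    have "basis_elem P (Suc (n + b)) t - ?u \<in> rel (fiDpow b P) (Suc n)"
      using subspace_neg[OF fimod_rel_subspace[OF fimod] act_basis_elem[OF t' skip_hom_fi_hom]]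
        rel_subset_rel_fiDpow[OF fimod, of "Suc n" b] push by auto
    moreover have "?u \<in> act P (n + b) (Suc (n + b)) (skip_hom n b) ` car P (n + b)"
      using basis_elem_car[OF t'] by blast
    ultimately have "(basis_elem P (Suc (n + b)) t - ?u) + ?u \<in> rel (fiDpow (Suc b) P) n"
      unfolding rel_fiDpow_Suc by (rule msumI)
    then show ?thesis by simp
  qed
qed

lemma basis_independent_mod_span:
  assumes T: "finite T" and f: "inj_on f T" "f ` T \<subseteq> basis_terms B m"
    and S: "S \<subseteq> basis_terms B m" "f ` T \<inter> S = {}"
    and comb: "(\<Sum>t\<in>T. s (c t) (basis_elem P m (f t))) \<in> msum (span (basis_elem P m ` S)) (rel P m)"
    and t: "t \<in> T"
  shows "c t = 0"
proof -
  from comb obtain v r where v: "v \<in> span (basis_elem P m ` S)" and r: "r \<in> rel P m"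
    and comb_eq: "(\<Sum>t\<in>T. s (c t) (basis_elem P m (f t))) = v + r"
    by (blast elim: msumE)
  from span_image_explicit[OF v] obtain A c' where A: "finite A" "A \<subseteq> S"
    and v_eq: "v = (\<Sum>a\<in>A. s (c' a) (basis_elem P m a))"
    by blast
  define d where "d w = (if w \<in> f ` T then c (the_inv_into T f w) else - c' w)" for w
  have d_f: "d (f t) = c t" if "t \<in> T" for t
    unfolding d_def using that the_inv_into_f_f[OF f(1)] by auto
  have on_T: "(\<Sum>w\<in>f ` T. s (d w) (basis_elem P m w)) = v + r"
    using d_f comb_eq by (simp add: sum.reindex[OF f(1)])
  have "(\<Sum>w\<in>A. s (d w) (basis_elem P m w)) = (\<Sum>w\<in>A. - s (c' w) (basis_elem P m w))"
  proof (rule sum.cong[OF refl])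
    fix w assume "w \<in> A"
    then have "w \<notin> f ` T" using A(2) S(2) by blast
    then show "s (d w) (basis_elem P m w) = - s (c' w) (basis_elem P m w)"
      unfolding d_def by (simp add: scale_minus_left)
  qed
  then have on_A: "(\<Sum>w\<in>A. s (d w) (basis_elem P m w)) = - v" by (simp add: v_eq sum_negf)
  have "f ` T \<inter> A = {}" using A(2) S(2) by blast
  then have "(\<Sum>w\<in>f ` T \<union> A. s (d w) (basis_elem P m w))
      = (\<Sum>w\<in>f ` T. s (d w) (basis_elem P m w)) + (\<Sum>w\<in>A. s (d w) (basis_elem P m w))"
    by (rule sum.union_disjoint[OF finite_imageI[OF T] A(1)])
  also have "\<dots> = r" unfolding on_T on_A by simp
  finally have "(\<Sum>w\<in>f ` T \<union> A. s (d w) (basis_elem P m w)) \<in> rel P m" using r by simp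
  moreover have "finite (f ` T \<union> A)" using T A(1) by simp
  moreover have "f ` T \<union> A \<subseteq> basis_terms B m" using f(2) A(2) S(1) by blast
  ultimately have "d (f t) = 0" using basis_independent[of "f ` T \<union> A" m d "f t"] t by blast
  then show ?thesis using d_f[OF t] by simp
qed

lemma iota_fiDpow_inj:
  assumes x: "x \<in> car (fiDpow b P) n" and ix: "iota (fiDpow b P) n x \<in> rel (fiDpow b P) (Suc n)"
  shows "x \<in> rel (fiDpow b P) n"
proof -
  let ?m = "Suc (n + b)"
  let ?push = "push_term (skip_hom n b :: 'g fimor)"
  let ?skip_x = "act P (n + b) ?m (skip_hom n b) x"
  have x: "x \<in> car P (n + b)" using x by (simp add: car_fiDpow)
  obtain T c where T: "finite T" "T \<subseteq> basis_terms B (n + b)"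
    and x_rel: "x - (\<Sum>t\<in>T. s (c t) (basis_elem P (n + b) t)) \<in> rel P (n + b)"
    using basis_expansion[OF x] by blast
  let ?comb = "\<lambda>X. \<Sum>t\<in>X. s (c t) (basis_elem P ?m (?push t))"
  define G where "G = {t \<in> T. \<not> misses b n t}"
  define M where "M = {t \<in> T. misses b n t}"
  let ?Mis = "{t \<in> basis_terms B ?m. misses b (Suc n) t}"
  let ?Z = "msum (span (basis_elem P ?m ` ?Mis)) (rel P ?m)"
  have Z: "subspace ?Z" by (rule subspace_msum[OF subspace_span fimod_rel_subspace[OF fimod]])
  have fin: "finite G" "finite M" and TGM: "T = G \<union> M" "G \<inter> M = {}" and GM: "G \<subseteq> T" "M \<subseteq> T"
    using T(1) unfolding G_def M_def by auto
  note pushed = push_term_basis_terms[OF _ skip_hom_fi_hom, of _ B n b]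
  have "?skip_x \<in> rel (fiDpow b P) (Suc n)" using ix by (simp add: iota_fiDpow)
  then have skip_x: "?skip_x \<in> ?Z" using rel_fiDpow_subset_span_misses[of b "Suc n"] by auto
  have "?skip_x - ?comb T \<in> rel P ?m" using act_basis_expansion[OF skip_hom_fi_hom T x x_rel] .
  then have skip_x_T: "?skip_x - ?comb T \<in> ?Z" using subset_msum_right[OF subspace_span] by blast
  have "?comb M \<in> span (basis_elem P ?m ` ?Mis)"
  proof (rule span_sum)
    fix t assume "t \<in> M"
    then have t: "t \<in> basis_terms B (n + b)" and "misses b n t" using T(2) unfolding M_def by auto
    then have "?push t \<in> ?Mis" using pushed[OF t] misses_push_skip_hom[of b n t] by simp
    then show "s (c t) (basis_elem P ?m (?push t)) \<in> span (basis_elem P ?m ` ?Mis)"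
      by (intro span_scale span_base) auto
  qed
  then have comb_M: "?comb M \<in> ?Z" using subset_msum_left[OF fimod_rel_subspace[OF fimod]] by blast
  have "?comb T = ?comb G + ?comb M" using sum.union_disjoint[OF fin TGM(2)] TGM(1) by simp
  then have "?comb G = ?skip_x - (?skip_x - ?comb T) - ?comb M" by (simp add: algebra_simps)
  also have "\<dots> \<in> ?Z" using subspace_diff[OF Z] skip_x skip_x_T comb_M by blast
  finally have comb_G: "?comb G \<in> ?Z" .
  have "inj_on ?push G" using inj_on_subset[OF inj_on_push_skip_hom] GM(1) T(2) by blast
  moreover have "?push ` G \<subseteq> basis_terms B ?m" using pushed GM(1) T(2) by blast
  moreover have "?push ` G \<inter> ?Mis = {}" using not_misses_push_skip_hom unfolding G_def by blast
  ultimately have G_zero: "c t = 0" if "t \<in> G" for t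
    using basis_independent_mod_span[OF fin(1) _ _ _ _ comb_G that] by blast
  have "(\<Sum>t\<in>T. s (c t) (basis_elem P (n + b) t)) = (\<Sum>t\<in>M. s (c t) (basis_elem P (n + b) t))"
    using G_zero T(1) unfolding G_def M_def by (intro sum.mono_neutral_right) auto
  moreover have "(\<Sum>t\<in>M. s (c t) (basis_elem P (n + b) t)) \<in> rel (fiDpow b P) n"
    using misses_basis_elem_rel_fiDpow T(2) fimod_rel_subspace[OF is_fimod_fiDpow[OF fimod]]
    unfolding M_def by (blast intro: subspace_sum subspace_scale)
  moreover have "x - (\<Sum>t\<in>T. s (c t) (basis_elem P (n + b) t)) \<in> rel (fiDpow b P) n"
    using x_rel rel_subset_rel_fiDpow[OF fimod, of n b] by blast
  ultimately show ?thesis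
    using subspace_add[OF fimod_rel_subspace[OF is_fimod_fiDpow[OF fimod]]] by fastforce
qed

end

lemma free_iota_fiDpow_inj:
  assumes "is_fimod s P" and "is_free s P"
    and "x \<in> car (fiDpow b P) n" and "iota (fiDpow b P) n x \<in> rel (fiDpow b P) (Suc n)"
  shows "x \<in> rel (fiDpow b P) n"
proof -
  obtain B where "free_fimod s P B" using is_free_imp_free_fimod[OF assms(1,2)] .
  then show ?thesis using free_fimod.iota_fiDpow_inj assms(3,4) by blast
qed

section \<open>Derived functors of D^a along a free resolution\<close>

definition derived_homology ::
    "(nat \<Rightarrow> ('g::group_add, 'p::ab_group_add) fimod) \<Rightarrow> (nat \<Rightarrow> nat \<Rightarrow> 'p \<Rightarrow> 'p) \<Rightarrow> nat \<Rightarrow> nat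
      \<Rightarrow> ('g, 'p) fimod" where
  "derived_homology P d b i = homology (fiDpow b (P (Suc i))) (fiDpow_map b (d (Suc i)))
      (fiDpow b (P i)) (fiDpow_map b (d i)) (fiDpow b (P (i - 1)))"

lemma derived_deg_eq_Sup:
  "derived_deg P d b i = Sup {ereal (real n) | n. \<not> fi_vanishes_at (derived_homology P d b i) n}"
  unfolding derived_deg_def fdeg_def fi_vanishes_at_def derived_homology_def ..

context
  fixes sV :: "'k::comm_ring_1 \<Rightarrow> 'v::ab_group_add \<Rightarrow> 'v" and V :: "('g::group_add, 'v) fimod"
    and sP :: "'k \<Rightarrow> 'p::ab_group_add \<Rightarrow> 'p" and P :: "nat \<Rightarrow> ('g, 'p) fimod"
    and d :: "nat \<Rightarrow> nat \<Rightarrow> 'p \<Rightarrow> 'p" and eps :: "nat \<Rightarrow> 'p \<Rightarrow> 'v"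
  assumes resolution: "free_resolution sV V sP P d eps"
begin

lemma resolution_fimod: "is_fimod sP (P i)"
  and resolution_free: "is_free sP (P i)"
  and resolution_morph: "fi_morph sP (P (Suc i)) sP (P i) (d (Suc i))"
  and resolution_exact: "exact_at (P (Suc (Suc i))) (d (Suc (Suc i))) (P (Suc i)) (d (Suc i)) (P i)"
  using resolution unfolding free_resolution_def by blast+

lemma derived_homology_0_vanishes:
  assumes "1 \<le> i"
  shows "fi_vanishes_at (derived_homology P d 0 i) n"
proof -
  obtain j where i: "i = Suc j" using assms by (cases i) auto
  from resolution_exact[of j] show ?thesis
    unfolding fi_vanishes_at_def derived_homology_def exact_at_def i
    by (simp add: msum_commute)
qed

lemma derived_homology_Suc_vanishes:
  assumes i: "2 \<le> i"
    and H_shift: "fi_vanishes_at (derived_homology P d b i) (Suc n)"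
    and H_lower: "fi_vanishes_at (derived_homology P d b (i - 1)) n"
  shows "fi_vanishes_at (derived_homology P d (Suc b) i) n"
proof -
  obtain j where j: "i = Suc (Suc j)" using i by (metis add_2_eq_Suc le_Suc_ex)
  let ?K = "\<lambda>k. fiDpow b (P k)" and ?d = "\<lambda>k. fiDpow_map b (d k)"
  have F: "is_fimod sP (?K k)" for k using is_fimod_fiDpow[OF resolution_fimod] .
  have M: "fi_morph sP (?K (Suc k)) sP (?K k) (?d (Suc k))" for k
    using fi_morph_fiDpow[OF resolution_morph resolution_fimod resolution_fimod] .
  have dd: "?d (Suc j) m (?d (Suc (Suc j)) m x) \<in> rel (?K j) m" if "x \<in> car (?K (Suc (Suc j))) m" for m x
  proof -
    have "d (Suc j) (m + b) (d (Suc (Suc j)) (m + b) x) \<in> rel (P j) (m + b)"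
      using that resolution_exact[of j] unfolding exact_at_def by (auto simp: car_fiDpow)
    then show ?thesis using rel_subset_rel_fiDpow[OF resolution_fimod] by (auto simp: fiDpow_map_def)
  qed
  have inj: "x \<in> rel (?K j) n" if "x \<in> car (?K j) n" "iota (?K j) n x \<in> rel (?K j) (Suc n)" for x
    using free_iota_fiDpow_inj[OF resolution_fimod resolution_free that] .
  from homology_fiD_vanishes[OF F F F M M dd inj] H_shift H_lower
  show ?thesis unfolding derived_homology_def j by (simp add: fiDpow_Suc fiDpow_map_Suc)
qed

lemma nonvanishing_derived_bound:
  assumes "1 \<le> i" and "\<not> fi_vanishes_at (derived_homology P d a i) n"
  shows "ereal (real n + real a + 1 - real i) \<le> dwidth P d"
  using assms
proof (induction a arbitrary: i n)
  case 0
  then show ?case using derived_homology_0_vanishes by blast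
next
  case (Suc a)
  show ?case
  proof (cases "i = 1")
    case True
    have "ereal (real n) \<le> derived_deg P d (Suc a) 1"
      unfolding derived_deg_eq_Sup using Suc.prems(2) True by (auto intro: Sup_upper)
    then have "ereal (real n) + ereal (real (Suc a)) \<le> derived_deg P d (Suc a) 1 + ereal (real (Suc a))"
      by (rule add_right_mono)
    also have "\<dots> \<le> dwidth P d" unfolding dwidth_def by (rule SUP_upper) auto
    finally show ?thesis using True by (simp add: algebra_simps)
  next
    case False
    then have i: "2 \<le> i" using Suc.prems(1) by simp
    then consider "\<not> fi_vanishes_at (derived_homology P d a i) (Suc n)"
      | "\<not> fi_vanishes_at (derived_homology P d a (i - 1)) n"
      using derived_homology_Suc_vanishes Suc.prems(2) by blast
    then show ?thesis
    proof cases
      case 1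
      then show ?thesis using Suc.IH[OF Suc.prems(1) 1] by (simp add: algebra_simps)
    next
      case 2
      have "1 \<le> i - 1" using i by simp
      then show ?thesis using Suc.IH[OF _ 2] i by (simp add: algebra_simps of_nat_diff)
    qed
  qed
qed

end

lemma ereal_le_shift:
  fixes n a i :: nat
  assumes "ereal (real n + real a + 1 - real i) \<le> w"
  shows "ereal (real n) \<le> w - 1 + ereal (real i) - ereal (real a)"
  using assms by (cases w) (simp_all add: one_ereal_def)

theorem mainTheorem10:
  fixes sV :: "'k::comm_ring_1 \<Rightarrow> 'v::ab_group_add \<Rightarrow> 'v"
    and V :: "('g::group_add, 'v) fimod"
    and sM :: "'k \<Rightarrow> 'm::ab_group_add \<Rightarrow> 'm"
    and M :: "('g, 'm) fimod"
    and \<pi> :: "nat \<Rightarrow> 'm \<Rightarrow> 'v"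
    and sP :: "'k \<Rightarrow> 'p::ab_group_add \<Rightarrow> 'p"
    and P :: "nat \<Rightarrow> ('g, 'p) fimod"
    and d :: "nat \<Rightarrow> nat \<Rightarrow> 'p \<Rightarrow> 'p"
    and eps :: "nat \<Rightarrow> 'p \<Rightarrow> 'v"
  assumes "presented_fin_by sM M \<pi> sV V"
    and "free_resolution sV V sP P d eps"
    and "a \<ge> 1" and "i \<ge> 1"
  shows "derived_deg P d a i \<le> dwidth P d - 1 + ereal (real i) - ereal (real a)"
  unfolding derived_deg_eq_Sup
  using nonvanishing_derived_bound[OF assms(2) assms(4)] ereal_le_shift
  by (blast intro: Sup_least)

end
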